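(* Let $Q$ be a quiver with no oriented cycles, $\theta\in\mathbb{Z}^{Q_0}$, and $\alpha_1\ne\alpha_2\in Q_1$ arrows with $\alpha_1^-=\alpha_2^-$, $\alpha_1^+=\alpha_2^+$; let $Q'$, $F$, $F'$, $\varphi$, $\varphi'$, $\pi$ be as in the context. If $u,v\in F$ are monomials with $\varphi(u)=\varphi(v)$ and $\pi(u)=\pi(v)$, then $u-v$ lies in the ideal $J$ of $F$ generated by $\mathcal{G}_2=\{t_mt_n-t_{m+\varepsilon_2-\varepsilon_1}t_{n+\varepsilon_1-\varepsilon_2}\mid m,n\in\nabla(Q,\theta)\cap\mathbb{Z}^{Q_1},\ m(\alpha_1)>0,\ n(\alpha_2)>0\}$, where $\varepsilon_i\in\mathbb{Z}^{Q_1}$ is the characteristic function of $\alpha_i$.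
   Context: For a quiver $Q$ (vertices $Q_0$, arrows $Q_1$, $a$ from $a^-$ to $a^+$) and $\theta\in\mathbb{Z}^{Q_0}$, $\nabla(Q,\theta)=\{x\in\mathbb{R}_{\ge0}^{Q_1}\mid\forall v:\ \theta(v)=\sum_{a^+=v}x(a)-\sum_{a^-=v}x(a)\}$. $x^m=\prod_ax(a)^{m(a)}$ in $\mathbb{C}[x(a)\mid a\in Q_1]$; $\mathcal{A}(Q,\theta)$ is the subalgebra generated by $x^m$ for $m\in\nabla(Q,\theta)\cap\mathbb{Z}^{Q_1}$; $F=\mathbb{C}[t_m\mid m\in\nabla(Q,\theta)\cap\mathbb{Z}^{Q_1}]$ and $\varphi:F\to\mathcal{A}(Q,\theta)$, $t_m\mapsto x^m$. $Q'$ is obtained from $Q$ by collapsing $\alpha_1,\alpha_2$ to one arrow $\alpha$; $F'$, $\varphi'$ are defined analogously for $(Q',\theta)$. $\pi:\mathbb{Z}^{Q_1}\to\mathbb{Z}^{Q'_1}$ is $\pi(m)(\alpha)=m(\alpha_1)+m(\alpha_2)$, $\pi(m)(\beta)=m(\beta)$ for other arrows; it maps $\nabla(Q,\theta)\cap\mathbb{Z}^{Q_1}$ to $\nabla(Q',\theta)\cap\mathbb{Z}^{Q'_1}$, and $\pi:F\to F'$ is the algebra map $t_m\mapsto t_{\pi(m)}$. *)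

theory Defs
  imports Complex_Main "HOL-Library.Poly_Mapping"
begin

definition no_oriented_cycles :: "'v set \<Rightarrow> 'a set \<Rightarrow> ('a \<Rightarrow> 'v) \<Rightarrow> ('a \<Rightarrow> 'v) \<Rightarrow> bool" where
  "no_oriented_cycles Q0 Q1 src tgt \<longleftrightarrow>
     (\<forall>v. (v, v) \<notin> trancl {(src a, tgt a) | a. a \<in> Q1})"

definition lattice_pts :: "'v set \<Rightarrow> 'a set \<Rightarrow> ('a \<Rightarrow> 'v) \<Rightarrow> ('a \<Rightarrow> 'v) \<Rightarrow> ('v \<Rightarrow> int) \<Rightarrow> ('a \<Rightarrow> int) set" where
  "lattice_pts Q0 Q1 src tgt \<theta> =
     {m. (\<forall>a. a \<notin> Q1 \<longrightarrow> m a = 0) \<and> (\<forall>a\<in>Q1. 0 \<le> m a) \<and>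
         (\<forall>v\<in>Q0. \<theta> v = (\<Sum>a\<in>{a\<in>Q1. tgt a = v}. m a) - (\<Sum>a\<in>{a\<in>Q1. src a = v}. m a))}"

type_synonym ('x, 'c) mpoly = "('x \<Rightarrow>\<^sub>0 nat) \<Rightarrow>\<^sub>0 'c"

definition Var :: "'x \<Rightarrow> ('x, 'c::comm_semiring_1) mpoly" where
  "Var x = Poly_Mapping.single (Poly_Mapping.single x 1) 1"

definition poly_subst :: "('x \<Rightarrow> ('y, 'c::comm_semiring_1) mpoly) \<Rightarrow> ('x, 'c) mpoly \<Rightarrow> ('y, 'c) mpoly" where
  "poly_subst \<sigma> p = (\<Sum>(ex::'x \<Rightarrow>\<^sub>0 nat)\<in>Poly_Mapping.keys p. Poly_Mapping.single 0 (Poly_Mapping.lookup p ex :: 'c) * (\<Prod>z\<in>Poly_Mapping.keys ex. (\<sigma> z) ^ (Poly_Mapping.lookup ex z)))"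

definition poly_ring_on :: "'x set \<Rightarrow> ('x, 'c::comm_semiring_1) mpoly set" where
  "poly_ring_on V = {p. \<forall>e\<in>Poly_Mapping.keys p. Poly_Mapping.keys e \<subseteq> V}"

definition monomials_on :: "'x set \<Rightarrow> ('x, 'c::comm_semiring_1) mpoly set" where
  "monomials_on V = {Poly_Mapping.single e 1 | e. Poly_Mapping.keys e \<subseteq> V}"

inductive_set ideal_gen :: "'r::comm_ring_1 set \<Rightarrow> 'r set \<Rightarrow> 'r set" for R G where
  zero: "0 \<in> ideal_gen R G"
| step: "g \<in> G \<Longrightarrow> r \<in> R \<Longrightarrow> x \<in> ideal_gen R G \<Longrightarrow> r * g + x \<in> ideal_gen R G"

definition xmon :: "'a set \<Rightarrow> ('a \<Rightarrow> int) \<Rightarrow> ('a, complex) mpoly" where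
  "xmon Q1 m = (\<Prod>a\<in>Q1. Var a ^ nat (m a))"

definition phi_map :: "'a set \<Rightarrow> ('a \<Rightarrow> int, complex) mpoly \<Rightarrow> ('a, complex) mpoly" where
  "phi_map Q1 = poly_subst (xmon Q1)"

text \<open>Collapsing alpha1, alpha2 into one arrow; alpha1 represents the new arrow alpha,
  so Q'_1 = Q1 - {alpha2}.\<close>
definition pi_vec :: "'a \<Rightarrow> 'a \<Rightarrow> ('a \<Rightarrow> int) \<Rightarrow> ('a \<Rightarrow> int)" where
  "pi_vec \<alpha>1 \<alpha>2 m = m(\<alpha>1 := m \<alpha>1 + m \<alpha>2, \<alpha>2 := 0)"

definition pi_map :: "'a \<Rightarrow> 'a \<Rightarrow> ('a \<Rightarrow> int, complex) mpoly \<Rightarrow> ('a \<Rightarrow> int, complex) mpoly" where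
  "pi_map \<alpha>1 \<alpha>2 = poly_subst (\<lambda>m. Var (pi_vec \<alpha>1 \<alpha>2 m))"

definition eps :: "'a \<Rightarrow> ('a \<Rightarrow> int)" where
  "eps \<alpha> = (\<lambda>a. if a = \<alpha> then 1 else 0)"

definition G2 :: "('a \<Rightarrow> int) set \<Rightarrow> 'a \<Rightarrow> 'a \<Rightarrow> ('a \<Rightarrow> int, complex) mpoly set" where
  "G2 L \<alpha>1 \<alpha>2 = {Var m * Var n - Var (\<lambda>a. m a + eps \<alpha>2 a - eps \<alpha>1 a) * Var (\<lambda>a. n a + eps \<alpha>1 a - eps \<alpha>2 a)
      | m n. m \<in> L \<and> n \<in> L \<and> m \<alpha>1 > 0 \<and> n \<alpha>2 > 0}"

end

theory Submission
  imports Defs "HOL-Library.Multiset"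
begin

(* Write u = t_{m_1}\<cdots>t_{m_k} and v = t_{n_1}\<cdots>t_{n_k}. Since \<pi>(u) = \<pi>(v), the factors can be
   paired so that \<pi>(m_i) = \<pi>(n_i): paired lattice points differ only in how they split the flow
   between the parallel arrows \<alpha>1 and \<alpha>2. Since \<phi>(u) = \<phi>(v), the total \<alpha>1-flow is the same on
   both sides. So if some pair disagrees, one pair has an \<alpha>1-surplus on the u-side and another one
   a deficit, and a single relation of G_2 shifts one unit of flow from \<alpha>1 to \<alpha>2 in the first and
   back in the second factor of u. This lowers the total surplus, and induction gives u - v \<in> J. *)

lemma lookup_sum_mset:
  "Poly_Mapping.lookup (\<Sum>x\<in>#M. f x) k = (\<Sum>x\<in>#M. Poly_Mapping.lookup (f x) k)"
  by (induction M) (simp_all add: lookup_add)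

lemma prod_mset_single_one:
  "(\<Prod>x\<in>#M. Poly_Mapping.single (f x) (1::'c::comm_semiring_1)) = Poly_Mapping.single (\<Sum>x\<in>#M. f x) 1"
  by (induction M) (simp_all add: mult_single)

lemma prod_single_one:
  "(\<Prod>x\<in>A. Poly_Mapping.single (f x) (1::'c::comm_semiring_1)) = Poly_Mapping.single (\<Sum>x\<in>A. f x) 1"
  unfolding prod_unfold_prod_mset sum_unfold_sum_mset image_mset.compositionality[symmetric, unfolded comp_def]
  by (rule prod_mset_single_one)

lemma Var_power: "(Var x :: ('x, 'c::comm_semiring_1) mpoly) ^ k = Poly_Mapping.single (Poly_Mapping.single x k) 1"
  by (induction k) (simp_all add: Var_def mult_single single_add[symmetric])

lemma xmon_eq_single: "xmon Q1 m = Poly_Mapping.single (\<Sum>a\<in>Q1. Poly_Mapping.single a (nat (m a))) 1"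
  unfolding xmon_def Var_power by (rule prod_single_one)

definition pm_of_mset :: "'x multiset \<Rightarrow> 'x \<Rightarrow>\<^sub>0 nat" where
  "pm_of_mset M = (\<Sum>x\<in>#M. Poly_Mapping.single x 1)"

lemma lookup_pm_of_mset [simp]: "Poly_Mapping.lookup (pm_of_mset M) x = count M x"
  by (induction M) (simp_all add: pm_of_mset_def lookup_add lookup_single)

lemma keys_pm_of_mset [simp]: "Poly_Mapping.keys (pm_of_mset M) = set_mset M"
  by (auto simp: in_keys_iff)

lemma pm_of_mset_inject [simp]: "pm_of_mset M = pm_of_mset N \<longleftrightarrow> M = N"
  by (metis lookup_pm_of_mset multiset_eqI)

lemma pm_of_mset_surj: "\<exists>M. pm_of_mset M = e"
proof
  have "{x. 0 < Poly_Mapping.lookup e x} = Poly_Mapping.keys e"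
    by (auto simp: in_keys_iff)
  then have "finite {x. 0 < Poly_Mapping.lookup e x}"
    by simp
  then show "pm_of_mset (Abs_multiset (Poly_Mapping.lookup e)) = e"
    by (intro poly_mapping_eqI) (simp add: count_Abs_multiset)
qed

lemma single_one_inject:
  "Poly_Mapping.single e (1::'c::zero_neq_one) = Poly_Mapping.single e' 1 \<longleftrightarrow> e = e'"
proof
  assume "Poly_Mapping.single e (1::'c) = Poly_Mapping.single e' 1"
  then have "Poly_Mapping.lookup (Poly_Mapping.single e (1::'c)) e = Poly_Mapping.lookup (Poly_Mapping.single e' 1) e"
    by (rule arg_cong)
  then show "e = e'" by (simp add: lookup_single when_def split: if_splits)
qed simp

definition monom_of_mset :: "'x multiset \<Rightarrow> ('x, 'c::comm_semiring_1) mpoly" where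
  "monom_of_mset M = (\<Prod>x\<in>#M. Var x)"

lemma monom_of_mset_add_mset [simp]: "monom_of_mset (add_mset x M) = Var x * monom_of_mset M"
  by (simp add: monom_of_mset_def)

lemma monom_of_mset_eq_single: "monom_of_mset M = Poly_Mapping.single (pm_of_mset M) 1"
  unfolding monom_of_mset_def Var_def pm_of_mset_def by (rule prod_mset_single_one)

lemma monom_of_mset_inject [simp]:
  "(monom_of_mset M :: ('x, 'c::comm_semiring_1) mpoly) = monom_of_mset N \<longleftrightarrow> M = N"
  by (simp add: monom_of_mset_eq_single single_one_inject)

lemma monomials_onE:
  assumes "u \<in> monomials_on V"
  obtains M where "set_mset M \<subseteq> V" "u = monom_of_mset M"
proof -
  obtain e where "u = Poly_Mapping.single e 1" "Poly_Mapping.keys e \<subseteq> V"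
    using assms by (auto simp: monomials_on_def)
  moreover obtain M where "pm_of_mset M = e"
    using pm_of_mset_surj by blast
  ultimately show thesis
    using that by (auto simp: monom_of_mset_eq_single)
qed

lemma monom_of_mset_in_poly_ring_on: "set_mset M \<subseteq> V \<Longrightarrow> monom_of_mset M \<in> poly_ring_on V"
  by (simp add: poly_ring_on_def monom_of_mset_eq_single)

lemma poly_subst_monom_of_mset: "poly_subst \<sigma> (monom_of_mset M) = (\<Prod>x\<in>#M. \<sigma> x)"
  by (simp add: poly_subst_def monom_of_mset_eq_single image_prod_mset_multiplicity)

lemma image_mset_eq_imp_pairing:
  assumes "image_mset p M = image_mset p N"
  obtains P where "image_mset fst P = M" "image_mset snd P = N" "\<forall>(x, y)\<in>#P. p x = p y"
proof -
  have "\<exists>P. image_mset fst P = M \<and> image_mset snd P = N \<and> (\<forall>(x, y)\<in>#P. p x = p y)"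
    using assms
  proof (induction M arbitrary: N)
    case empty
    then show ?case by (intro exI[of _ "{#}"]) simp
  next
    case (add x M N)
    have "p x \<in># image_mset p N"
      by (simp flip: add.prems)
    then obtain y where y: "y \<in># N" "p y = p x"
      by auto
    then have N: "N = add_mset y (N - {#y#})"
      by simp
    have "image_mset p M = image_mset p (N - {#y#})"
      using add.prems y(2) by (subst (asm) N) simp
    then obtain P where "image_mset fst P = M" "image_mset snd P = N - {#y#}" "\<forall>(x, y)\<in>#P. p x = p y"
      using add.IH by blast
    then show ?case
      using y by (intro exI[of _ "add_mset (x, y) P"]) auto
  qed
  then show thesis
    using that by blast
qed

lemma sum_mset_eq_imp_ex_greater:
  fixes f g :: "'a \<Rightarrow> 'b::{ordered_cancel_comm_monoid_add, linorder}"
  assumes sums: "(\<Sum>y\<in>#P. f y) = (\<Sum>y\<in>#P. g y)" and "x \<in># P" "f x < g x"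
  shows "\<exists>y\<in>#P. g y < f y"
proof (rule ccontr)
  assume "\<not> ?thesis"
  then have "f y \<le> g y" if "y \<in># P - {#x#}" for y
    using that by (auto simp: not_less dest: in_diffD)
  then have "f x + (\<Sum>y\<in>#P - {#x#}. f y) < g x + (\<Sum>y\<in>#P - {#x#}. g y)"
    using \<open>f x < g x\<close> by (intro add_less_le_mono sum_mset_mono) auto
  moreover have "P = add_mset x (P - {#x#})"
    using \<open>x \<in># P\<close> by simp
  ultimately have "(\<Sum>y\<in>#P. f y) < (\<Sum>y\<in>#P. g y)"
    by (metis sum_mset.add_mset image_mset_add_mset)
  then show False
    using sums by simp
qed

lemma sum_mset_eq_imp_opposite_pair:
  fixes f g :: "'a \<Rightarrow> 'b::{ordered_cancel_comm_monoid_add, linorder}"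
  assumes sums: "(\<Sum>y\<in>#P. f y) = (\<Sum>y\<in>#P. g y)" and "\<exists>x\<in>#P. f x \<noteq> g x"
  obtains x y P0 where "P = add_mset x (add_mset y P0)" "g x < f x" "f y < g y"
proof -
  have "\<exists>x\<in>#P. g x < f x" "\<exists>y\<in>#P. f y < g y"
    using assms(2) sum_mset_eq_imp_ex_greater[OF sums] sum_mset_eq_imp_ex_greater[OF sums[symmetric]]
    by (metis linorder_neqE)+
  then obtain x y where xy: "x \<in># P" "g x < f x" "y \<in># P" "f y < g y"
    by blast
  then have "x \<noteq> y"
    by auto
  then have "y \<in># P - {#x#}"
    using xy(3) by (simp add: in_diff_count)
  then have "P = add_mset x (add_mset y (P - {#x#} - {#y#}))"
    using xy(1) by (simp only: insert_DiffM)
  then show thesis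
    using that xy by blast
qed

lemma ideal_gen_add: "a \<in> ideal_gen R G \<Longrightarrow> b \<in> ideal_gen R G \<Longrightarrow> a + b \<in> ideal_gen R G"
  by (induction a rule: ideal_gen.induct) (simp_all add: add.assoc ideal_gen.step)

lemma ideal_gen_mult_generator: "g \<in> G \<Longrightarrow> r \<in> R \<Longrightarrow> r * g \<in> ideal_gen R G"
  using ideal_gen.step[OF _ _ ideal_gen.zero] by fastforce

definition move_unit :: "'a \<Rightarrow> 'a \<Rightarrow> ('a \<Rightarrow> int) \<Rightarrow> 'a \<Rightarrow> int" where
  "move_unit p q m = (\<lambda>a. m a + eps q a - eps p a)"

lemma move_unit_apply:
  "move_unit p q m a = m a + (if a = q then 1 else 0) - (if a = p then 1 else 0)"
  by (simp add: move_unit_def eps_def)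

lemma G2_memI:
  "m \<in> L \<Longrightarrow> n \<in> L \<Longrightarrow> 0 < m \<alpha>1 \<Longrightarrow> 0 < n \<alpha>2 \<Longrightarrow>
    Var m * Var n - Var (move_unit \<alpha>1 \<alpha>2 m) * Var (move_unit \<alpha>2 \<alpha>1 n) \<in> G2 L \<alpha>1 \<alpha>2"
  unfolding G2_def move_unit_def by blast

lemma sum_move_unit:
  assumes "finite S" "p \<in> S \<longleftrightarrow> q \<in> S"
  shows "(\<Sum>a\<in>S. move_unit p q m a) = (\<Sum>a\<in>S. m a)"
  using assms by (simp add: move_unit_apply sum.distrib sum_subtractf)

lemma move_unit_in_lattice_pts:
  assumes "finite Q1" and m: "m \<in> lattice_pts Q0 Q1 src tgt \<theta>" and "0 < m p"
    and "p \<in> Q1" "q \<in> Q1" "p \<noteq> q" "src p = src q" "tgt p = tgt q"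
  shows "move_unit p q m \<in> lattice_pts Q0 Q1 src tgt \<theta>"
proof -
  have flow: "(\<Sum>a\<in>{a\<in>Q1. h a = v}. move_unit p q m a) = (\<Sum>a\<in>{a\<in>Q1. h a = v}. m a)"
    if "h p = h q" for h :: "'a \<Rightarrow> 'v" and v
    using assms(1,4,5) that by (intro sum_move_unit) auto
  have m0: "\<forall>a. a \<notin> Q1 \<longrightarrow> m a = 0" and m1: "\<forall>a\<in>Q1. 0 \<le> m a"
    and m2: "\<forall>v\<in>Q0. \<theta> v = (\<Sum>a\<in>{a\<in>Q1. tgt a = v}. m a) - (\<Sum>a\<in>{a\<in>Q1. src a = v}. m a)"
    using m unfolding lattice_pts_def by auto
  show ?thesis
    unfolding lattice_pts_def
  proof (intro CollectI conjI allI ballI impI)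
    fix a
    assume "a \<notin> Q1"
    then show "move_unit p q m a = 0"
      using m0 assms(4,5) by (auto simp: move_unit_apply)
  next
    fix a
    assume "a \<in> Q1"
    then show "0 \<le> move_unit p q m a"
      using m1 \<open>0 < m p\<close> by (auto simp: move_unit_apply)
  next
    fix v
    assume "v \<in> Q0"
    then show "\<theta> v = (\<Sum>a\<in>{a\<in>Q1. tgt a = v}. move_unit p q m a) - (\<Sum>a\<in>{a\<in>Q1. src a = v}. move_unit p q m a)"
      using m2 unfolding flow[of tgt, OF assms(8)] flow[of src, OF assms(7)] by blast
  qed
qed

lemma pi_vec_move_unit_12: "\<alpha>1 \<noteq> \<alpha>2 \<Longrightarrow> pi_vec \<alpha>1 \<alpha>2 (move_unit \<alpha>1 \<alpha>2 m) = pi_vec \<alpha>1 \<alpha>2 m"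
  by (simp add: pi_vec_def move_unit_apply fun_eq_iff)

lemma pi_vec_move_unit_21: "\<alpha>1 \<noteq> \<alpha>2 \<Longrightarrow> pi_vec \<alpha>1 \<alpha>2 (move_unit \<alpha>2 \<alpha>1 m) = pi_vec \<alpha>1 \<alpha>2 m"
  by (simp add: pi_vec_def move_unit_apply fun_eq_iff)

lemma pi_vec_eq_imp_sum_eq:
  "\<alpha>1 \<noteq> \<alpha>2 \<Longrightarrow> pi_vec \<alpha>1 \<alpha>2 x = pi_vec \<alpha>1 \<alpha>2 y \<Longrightarrow> x \<alpha>1 + x \<alpha>2 = y \<alpha>1 + y \<alpha>2"
  by (drule fun_cong[of _ _ \<alpha>1]) (simp add: pi_vec_def)

lemma pi_vec_eq_imp_eq:
  assumes "\<alpha>1 \<noteq> \<alpha>2" "pi_vec \<alpha>1 \<alpha>2 x = pi_vec \<alpha>1 \<alpha>2 y" "x \<alpha>1 = y \<alpha>1"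
  shows "x = y"
proof
  fix a
  have "pi_vec \<alpha>1 \<alpha>2 x b = pi_vec \<alpha>1 \<alpha>2 y b" for b
    using assms(2) by simp
  from this[of \<alpha>1] this[of a] assms(1,3) show "x a = y a"
    by (auto simp: pi_vec_def split: if_splits)
qed

lemma phi_map_monom_of_mset:
  "phi_map Q1 (monom_of_mset M) = Poly_Mapping.single (\<Sum>m\<in>#M. \<Sum>a\<in>Q1. Poly_Mapping.single a (nat (m a))) 1"
  by (simp add: phi_map_def poly_subst_monom_of_mset xmon_eq_single prod_mset_single_one)

lemma phi_map_eq_imp_arrow_sum_eq:
  assumes "finite Q1" "\<alpha> \<in> Q1" "phi_map Q1 (monom_of_mset M) = phi_map Q1 (monom_of_mset N)"
  shows "(\<Sum>m\<in>#M. nat (m \<alpha>)) = (\<Sum>m\<in>#N. nat (m \<alpha>))"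
proof -
  have lookup: "Poly_Mapping.lookup (\<Sum>m\<in>#K. \<Sum>a\<in>Q1. Poly_Mapping.single a (nat (m a))) \<alpha> = (\<Sum>m\<in>#K. nat (m \<alpha>))" for K
    using assms(1,2) by (simp add: lookup_sum_mset lookup_sum lookup_single when_def)
  have "(\<Sum>m\<in>#M. \<Sum>a\<in>Q1. Poly_Mapping.single a (nat (m a))) = (\<Sum>m\<in>#N. \<Sum>a\<in>Q1. Poly_Mapping.single a (nat (m a)))"
    using assms(3) unfolding phi_map_monom_of_mset single_one_inject .
  then show ?thesis
    unfolding lookup[symmetric] by (rule arg_cong)
qed

lemma pi_map_monom_of_mset:
  "pi_map \<alpha>1 \<alpha>2 (monom_of_mset M) = monom_of_mset (image_mset (pi_vec \<alpha>1 \<alpha>2) M)"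
  unfolding pi_map_def poly_subst_monom_of_mset by (simp add: monom_of_mset_def multiset.map_comp comp_def)

locale parallel_arrows =
  fixes Q0 :: "'v set" and Q1 :: "'a set" and src tgt :: "'a \<Rightarrow> 'v" and \<theta> :: "'v \<Rightarrow> int"
    and \<alpha>1 \<alpha>2 :: 'a
  assumes finite_arrows: "finite Q1"
    and arrows: "\<alpha>1 \<in> Q1" "\<alpha>2 \<in> Q1" "\<alpha>1 \<noteq> \<alpha>2"
    and parallel: "src \<alpha>1 = src \<alpha>2" "tgt \<alpha>1 = tgt \<alpha>2"
begin

abbreviation L :: "('a \<Rightarrow> int) set" where
  "L \<equiv> lattice_pts Q0 Q1 src tgt \<theta>"

abbreviation J :: "('a \<Rightarrow> int, complex) mpoly set" where
  "J \<equiv> ideal_gen (poly_ring_on L) (G2 L \<alpha>1 \<alpha>2)"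

lemma lattice_nonneg: "m \<in> L \<Longrightarrow> a \<in> Q1 \<Longrightarrow> 0 \<le> m a"
  by (simp add: lattice_pts_def)

lemma phi_map_eq_imp_\<alpha>1_sum_eq:
  assumes "set_mset M \<subseteq> L" "set_mset N \<subseteq> L"
    and "phi_map Q1 (monom_of_mset M) = phi_map Q1 (monom_of_mset N)"
  shows "(\<Sum>m\<in>#M. m \<alpha>1) = (\<Sum>m\<in>#N. m \<alpha>1)"
proof -
  have int_nat: "(\<Sum>m\<in>#K. m \<alpha>1) = int (\<Sum>m\<in>#K. nat (m \<alpha>1))" if "set_mset K \<subseteq> L" for K
    using that lattice_nonneg[OF _ arrows(1)] by (induction K) auto
  show ?thesis
    unfolding int_nat[OF assms(1)] int_nat[OF assms(2)]
      phi_map_eq_imp_arrow_sum_eq[OF finite_arrows arrows(1) assms(3)] ..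
qed

lemma exchange_in_J:
  assumes "m \<in> L" "m' \<in> L" "0 < m \<alpha>1" "0 < m' \<alpha>2" "set_mset R \<subseteq> L"
  shows "monom_of_mset (add_mset m (add_mset m' R))
    - monom_of_mset (add_mset (move_unit \<alpha>1 \<alpha>2 m) (add_mset (move_unit \<alpha>2 \<alpha>1 m') R)) \<in> J"
proof -
  have "monom_of_mset R * (Var m * Var m' - Var (move_unit \<alpha>1 \<alpha>2 m) * Var (move_unit \<alpha>2 \<alpha>1 m')) \<in> J"
    using assms by (intro ideal_gen_mult_generator G2_memI monom_of_mset_in_poly_ring_on)
  then show ?thesis
    by (simp add: algebra_simps)
qed

definition matched :: "(('a \<Rightarrow> int) \<times> ('a \<Rightarrow> int)) multiset \<Rightarrow> bool" where
  "matched P \<longleftrightarrow> (\<forall>(m, n)\<in>#P. m \<in> L \<and> n \<in> L \<and> pi_vec \<alpha>1 \<alpha>2 m = pi_vec \<alpha>1 \<alpha>2 n)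
     \<and> (\<Sum>p\<in>#P. fst p \<alpha>1) = (\<Sum>p\<in>#P. snd p \<alpha>1)"

definition excess :: "(('a \<Rightarrow> int) \<times> ('a \<Rightarrow> int)) multiset \<Rightarrow> nat" where
  "excess P = (\<Sum>p\<in>#P. nat (fst p \<alpha>1 - snd p \<alpha>1))"

lemma matchedI:
  assumes "set_mset (image_mset fst P) \<subseteq> L" "set_mset (image_mset snd P) \<subseteq> L"
    and "\<forall>(m, n)\<in>#P. pi_vec \<alpha>1 \<alpha>2 m = pi_vec \<alpha>1 \<alpha>2 n"
    and "(\<Sum>m\<in>#image_mset fst P. m \<alpha>1) = (\<Sum>n\<in>#image_mset snd P. n \<alpha>1)"
  shows "matched P"
  using assms unfolding matched_def by (fastforce simp: multiset.map_comp comp_def)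

lemma matched_exchange:
  assumes "matched P" "\<exists>p\<in>#P. fst p \<alpha>1 \<noteq> snd p \<alpha>1"
  obtains P' where "matched P'" "image_mset snd P' = image_mset snd P" "excess P' < excess P"
    "monom_of_mset (image_mset fst P) - monom_of_mset (image_mset fst P') \<in> J"
proof -
  have pairs: "\<forall>(m, n)\<in>#P. m \<in> L \<and> n \<in> L \<and> pi_vec \<alpha>1 \<alpha>2 m = pi_vec \<alpha>1 \<alpha>2 n"
    and sums: "(\<Sum>p\<in>#P. fst p \<alpha>1) = (\<Sum>p\<in>#P. snd p \<alpha>1)"
    using assms(1) by (auto simp: matched_def)
  obtain m n m' n' P0 where P: "P = add_mset (m, n) (add_mset (m', n') P0)"
    and gt: "n \<alpha>1 < m \<alpha>1" and lt: "m' \<alpha>1 < n' \<alpha>1"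
    using sum_mset_eq_imp_opposite_pair[OF sums assms(2)] by (metis prod.collapse)
  have L: "m \<in> L" "n \<in> L" "m' \<in> L" "n' \<in> L" "set_mset (image_mset fst P0) \<subseteq> L"
    and pi: "pi_vec \<alpha>1 \<alpha>2 m = pi_vec \<alpha>1 \<alpha>2 n" "pi_vec \<alpha>1 \<alpha>2 m' = pi_vec \<alpha>1 \<alpha>2 n'"
    using pairs by (auto simp: P)
  have pos: "0 < m \<alpha>1" "0 < m' \<alpha>2"
    using gt lt pi_vec_eq_imp_sum_eq[OF arrows(3) pi(2)]
      lattice_nonneg[OF L(2) arrows(1)] lattice_nonneg[OF L(4) arrows(2)] by linarith+
  define k where "k = move_unit \<alpha>1 \<alpha>2 m"
  define k' where "k' = move_unit \<alpha>2 \<alpha>1 m'"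
  have k: "k \<alpha>1 = m \<alpha>1 - 1" "k' \<alpha>1 = m' \<alpha>1 + 1"
    using arrows(3) by (simp_all add: k_def k'_def move_unit_apply)
  have kL: "k \<in> L" "k' \<in> L"
    unfolding k_def k'_def using finite_arrows L(1,3) pos arrows parallel
    by (auto intro!: move_unit_in_lattice_pts)
  define P' where "P' = add_mset (k, n) (add_mset (k', n') P0)"
  show thesis
  proof (rule that)
    show "matched P'"
      using pairs sums kL k pi arrows(3)
      by (auto simp: matched_def P P'_def k_def k'_def pi_vec_move_unit_12 pi_vec_move_unit_21)
    show "image_mset snd P' = image_mset snd P"
      by (simp add: P P'_def)
    show "excess P' < excess P"
      using gt lt k by (simp add: excess_def P P'_def nat_diff_distrib)
    show "monom_of_mset (image_mset fst P) - monom_of_mset (image_mset fst P') \<in> J"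
      using exchange_in_J[OF L(1,3) pos L(5)] by (simp add: P P'_def k_def k'_def)
  qed
qed

lemma matched_monom_diff_in_J:
  assumes "matched P"
  shows "monom_of_mset (image_mset fst P) - monom_of_mset (image_mset snd P) \<in> J"
  using assms
proof (induction "excess P" arbitrary: P rule: less_induct)
  case less
  show ?case
  proof (cases "\<forall>p\<in>#P. fst p \<alpha>1 = snd p \<alpha>1")
    case True
    have "fst p = snd p" if "p \<in># P" for p
    proof (rule pi_vec_eq_imp_eq[OF arrows(3)])
      show "pi_vec \<alpha>1 \<alpha>2 (fst p) = pi_vec \<alpha>1 \<alpha>2 (snd p)"
        using less.prems that by (cases p) (auto simp: matched_def)
      show "fst p \<alpha>1 = snd p \<alpha>1"
        using True that by blast
    qed
    then have "image_mset fst P = image_mset snd P"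
      by (rule image_mset_cong)
    then show ?thesis
      by (simp add: ideal_gen.zero)
  next
    case False
    then obtain P' where P': "matched P'" "image_mset snd P' = image_mset snd P" "excess P' < excess P"
      and step: "monom_of_mset (image_mset fst P) - monom_of_mset (image_mset fst P') \<in> J"
      using matched_exchange[OF less.prems] by blast
    have "monom_of_mset (image_mset fst P') - monom_of_mset (image_mset snd P) \<in> J"
      using less.hyps[OF P'(3,1)] P'(2) by simp
    from ideal_gen_add[OF step this] show ?thesis
      by simp
  qed
qed

end

theorem lemma9p5:
  fixes Q0 :: "'v set" and Q1 :: "'a set" and src tgt :: "'a \<Rightarrow> 'v"
    and \<theta> :: "'v \<Rightarrow> int" and \<alpha>1 \<alpha>2 :: 'a
    and u v :: "('a \<Rightarrow> int, complex) mpoly"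
  assumes "finite Q0" and "finite Q1"
    and "\<forall>a\<in>Q1. src a \<in> Q0 \<and> tgt a \<in> Q0"
    and "no_oriented_cycles Q0 Q1 src tgt"
    and "\<alpha>1 \<in> Q1" and "\<alpha>2 \<in> Q1" and "\<alpha>1 \<noteq> \<alpha>2"
    and "src \<alpha>1 = src \<alpha>2" and "tgt \<alpha>1 = tgt \<alpha>2"
    and "u \<in> monomials_on (lattice_pts Q0 Q1 src tgt \<theta>)"
    and "v \<in> monomials_on (lattice_pts Q0 Q1 src tgt \<theta>)"
    and "phi_map Q1 u = phi_map Q1 v"
    and "pi_map \<alpha>1 \<alpha>2 u = pi_map \<alpha>1 \<alpha>2 v"
  shows "u - v \<in> ideal_gen (poly_ring_on (lattice_pts Q0 Q1 src tgt \<theta>))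
                   (G2 (lattice_pts Q0 Q1 src tgt \<theta>) \<alpha>1 \<alpha>2)"
proof -
  interpret parallel_arrows Q0 Q1 src tgt \<theta> \<alpha>1 \<alpha>2
    using assms(2,5-9) by unfold_locales
  obtain M N where M: "set_mset M \<subseteq> L" "u = monom_of_mset M"
    and N: "set_mset N \<subseteq> L" "v = monom_of_mset N"
    using assms(10,11) by (metis monomials_onE)
  have "image_mset (pi_vec \<alpha>1 \<alpha>2) M = image_mset (pi_vec \<alpha>1 \<alpha>2) N"
    using assms(13) by (simp add: M N pi_map_monom_of_mset)
  then obtain P where P: "image_mset fst P = M" "image_mset snd P = N"
    "\<forall>(m, n)\<in>#P. pi_vec \<alpha>1 \<alpha>2 m = pi_vec \<alpha>1 \<alpha>2 n"
    by (rule image_mset_eq_imp_pairing)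
  have "matched P"
  proof (rule matchedI)
    show "(\<Sum>m\<in>#image_mset fst P. m \<alpha>1) = (\<Sum>n\<in>#image_mset snd P. n \<alpha>1)"
      using assms(12) unfolding P(1,2) M(2) N(2) by (rule phi_map_eq_imp_\<alpha>1_sum_eq[OF M(1) N(1)])
  qed (use M(1) N(1) P in simp_all)
  then show ?thesis
    unfolding M(2) N(2) P(1,2)[symmetric] by (rule matched_monom_diff_in_J)
qed

end
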